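(* Let $0<T<\infty$, $1<p<\infty$ and $c>0$, and set $f_j(\tau)=e^{-c2^{2j}\tau}$ for $j\in\mathbb Z$, $\tau\ge0$. There is a constant $C>0$ (independent of the functions $g_j$) such that for every sequence $(g_j)_{j\in\mathbb Z}$ of measurable functions on $(0,T)$, \[ \int_0^T\int_0^t\Big|\sum_{j=1}^\infty f_j(t-s)g_j(s)\Big|^p ds\,dt\le C\int_0^T\sum_{j=1}^\infty 2^{-2j}|g_j(s)|^p ds \] and \[ \int_0^T\int_0^t\Big|\sum_{j=-\infty}^\infty f_j(t-s)g_j(s)\Big|^p ds\,dt\le C\int_0^T\sum_{j=-\infty}^\infty 2^{-2j}|g_j(s)|^p ds. \] *)

theory Defs
  imports "HOL-Analysis.Analysis"
begin

definition heat_kernel_f :: "real \<Rightarrow> int \<Rightarrow> real \<Rightarrow> real" where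
  "heat_kernel_f c j \<tau> = exp (- c * (2::real) powi (2 * j) * \<tau>)"

end

(*
  Write f_j(t - s) g_j(s) = psi_j(t - s) y_j(s) with psi_j = 2^(2j/p) f_j and y_j = 2^(-2j/p) |g_j|,
  so that y_j^p = 2^(-2j) |g_j|^p.  Since psi_j(4^m tau) = 4^(-m/p) psi_(j+m)(tau), the kernel sum
  S(tau) = sum_j psi_j(tau) is bounded by A tau^(-1/p).  Jensen's inequality with the weights
  psi_j(t - s) gives |sum_j f_j(t - s) g_j(s)|^p <= S(t - s)^(p-1) sum_j psi_j(t - s) y_j(s)^p, and
  integrating in t first, the integral of (A tau^(-1/p))^(p-1) psi_j(tau) over tau > 0 equals
  A^(p-1) Gamma(1/p) c^(-1/p) for every j.  The sum over j >= 1 is the case g_j = 0 for j <= 0.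
*)

theory Submission
  imports Defs
begin

lemma infsum_cmult_right_ennreal:
  fixes f :: "'a \<Rightarrow> ennreal"
  shows "(\<Sum>\<^sub>\<infinity>k\<in>A. c * f k) = c * infsum f A"
proof -
  have "(\<Sum>\<^sub>\<infinity>k\<in>A. c * f k) = (SUP F\<in>{F. finite F \<and> F \<subseteq> A}. c * sum f F)"
    by (subst nonneg_infsum_complete) (simp_all add: sum_distrib_left)
  also have "\<dots> = c * infsum f A"
    by (simp add: SUP_mult_left_ennreal nonneg_infsum_complete)
  finally show ?thesis .
qed

lemma infsum_ennreal_eq_suminf:
  fixes f :: "nat \<Rightarrow> ennreal"
  shows "(\<Sum>\<^sub>\<infinity>n. f n) = suminf f"
proof -
  have "f sums (\<Sum>\<^sub>\<infinity>n. f n)"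
    by (intro has_sum_imp_sums has_sum_infsum nonneg_summable_on_complete) simp
  then show ?thesis by (simp add: sums_iff)
qed

lemma infsum_int_ennreal_split:
  fixes f :: "int \<Rightarrow> ennreal"
  shows "(\<Sum>\<^sub>\<infinity>k. f k) = (\<Sum>n. f (int n)) + (\<Sum>n. f (- int (Suc n)))"
proof -
  have "(UNIV :: int set) = range int \<union> range (\<lambda>n. - int (Suc n))"
  proof (intro set_eqI iffI)
    fix k :: int
    show "k \<in> range int \<union> range (\<lambda>n. - int (Suc n))"
    proof (cases "k \<ge> 0")
      case True
      then show ?thesis by (metis UnI1 nonneg_int_cases rangeI)
    next
      case False
      then have "k = - int (Suc (nat (- k) - 1))" by simp
      then show ?thesis by blast
    qed
  qed simp
  have "(\<Sum>\<^sub>\<infinity>k. f k) = (\<Sum>\<^sub>\<infinity>k\<in>range int. f k) + (\<Sum>\<^sub>\<infinity>k\<in>range (\<lambda>n. - int (Suc n)). f k)"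
    by (subst \<open>UNIV = _\<close>, intro infsum_Un_disjoint nonneg_summable_on_complete) auto
  also have "\<dots> = (\<Sum>\<^sub>\<infinity>n. f (int n)) + (\<Sum>\<^sub>\<infinity>n. f (- int (Suc n)))"
    by (subst (1 2) infsum_reindex) (auto simp: o_def inj_on_def)
  finally show ?thesis by (simp add: infsum_ennreal_eq_suminf)
qed

lemma infsum_int_ennreal_eq_suminf_pos:
  fixes f :: "int \<Rightarrow> ennreal"
  assumes "\<And>k. k \<le> 0 \<Longrightarrow> f k = 0"
  shows "(\<Sum>\<^sub>\<infinity>k. f k) = (\<Sum>n. f (int (Suc n)))"
proof -
  have "(\<lambda>n. f (int (Suc n))) sums (\<Sum>n. f (int (Suc n)))" by (rule summable_sums) simp
  then have "(\<lambda>n. f (int n)) sums (\<Sum>n. f (int (Suc n)))"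
    using sums_Suc[of "\<lambda>n. f (int n)"] assms[of 0] by simp
  then show ?thesis by (simp add: infsum_int_ennreal_split assms sums_iff)
qed

lemma nn_integral_infsum_int:
  fixes f :: "int \<Rightarrow> 'a \<Rightarrow> ennreal"
  assumes [measurable]: "\<And>k. f k \<in> borel_measurable M"
  shows "(\<integral>\<^sup>+x. (\<Sum>\<^sub>\<infinity>k. f k x) \<partial>M) = (\<Sum>\<^sub>\<infinity>k. \<integral>\<^sup>+x. f k x \<partial>M)"
proof -
  have "(\<integral>\<^sup>+x. (\<Sum>\<^sub>\<infinity>k. f k x) \<partial>M)
      = (\<integral>\<^sup>+x. (\<Sum>n. f (int n) x) \<partial>M) + (\<integral>\<^sup>+x. (\<Sum>n. f (- int (Suc n)) x) \<partial>M)"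
    unfolding infsum_int_ennreal_split by (rule nn_integral_add) auto
  also have "\<dots> = (\<Sum>\<^sub>\<infinity>k. \<integral>\<^sup>+x. f k x \<partial>M)"
    unfolding infsum_int_ennreal_split by (simp add: nn_integral_suminf)
  finally show ?thesis .
qed

lemma ennreal_abs_suminf_le:
  fixes a :: "nat \<Rightarrow> real"
  shows "ennreal \<bar>suminf a\<bar> \<le> (\<Sum>n. ennreal \<bar>a n\<bar>)"
proof (cases "summable (\<lambda>n. \<bar>a n\<bar>)")
  case True
  then show ?thesis
    by (simp add: summable_rabs suminf_ennreal2 ennreal_leI)
next
  case False
  then show ?thesis
    using summable_suminf_not_top[of "\<lambda>n. \<bar>a n\<bar>"] by (metis abs_ge_zero top_greatest)
qed

lemma ennreal_abs_infsum_le: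
  fixes a :: "'a \<Rightarrow> real"
  shows "ennreal \<bar>infsum a UNIV\<bar> \<le> (\<Sum>\<^sub>\<infinity>k. ennreal \<bar>a k\<bar>)"
proof (cases "a summable_on UNIV")
  case True
  then have summable: "(\<lambda>k. \<bar>a k\<bar>) summable_on UNIV"
    using summable_on_iff_abs_summable_on_real by auto
  have "\<bar>infsum a UNIV\<bar> \<le> infsum (\<lambda>k. \<bar>a k\<bar>) UNIV"
    using norm_infsum_bound[of a UNIV] summable by simp
  moreover have "ennreal (infsum (\<lambda>k. \<bar>a k\<bar>) UNIV) = (\<Sum>\<^sub>\<infinity>k. ennreal \<bar>a k\<bar>)"
    using infsum_comm_additive_general[of UNIV ennreal "\<lambda>k. \<bar>a k\<bar>"] summable
    by (simp add: o_def sum_ennreal isCont_def tendsto_ennrealI)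
  ultimately show ?thesis by (metis ennreal_leI)
next
  case False
  then show ?thesis by (simp add: infsum_not_exists)
qed

lemma convex_on_nonneg_powr:
  assumes "1 \<le> p"
  shows "convex_on {0..} (\<lambda>x::real. x powr p)"
proof
  fix t x y :: real
  assume t: "0 < t" "t < 1" and xy: "x \<in> {0..}" "y \<in> {0..}" "x < y"
  show "((1 - t) *\<^sub>R x + t *\<^sub>R y) powr p \<le> (1 - t) * x powr p + t * y powr p"
  proof (cases "x = 0")
    case True
    have "t powr p \<le> t powr 1"
      using t assms by (intro powr_mono') auto
    then have "t powr p * y powr p \<le> t * y powr p"
      using t by (intro mult_right_mono) auto
    then show ?thesis
      using True t xy by (simp add: powr_mult)
  next
    case False
    then show ?thesis
      using xy t by (intro convex_onD[OF powr_convex[OF assms]]) auto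
  qed
qed (simp add: convex_real_interval)

lemma sum_weighted_powr_le:
  fixes \<phi> y :: "'a \<Rightarrow> real"
  assumes "finite F" "1 \<le> p" "\<And>i. i \<in> F \<Longrightarrow> 0 \<le> \<phi> i" "\<And>i. i \<in> F \<Longrightarrow> 0 \<le> y i"
  shows "(\<Sum>i\<in>F. \<phi> i * y i) powr p \<le> (\<Sum>i\<in>F. \<phi> i) powr (p - 1) * (\<Sum>i\<in>F. \<phi> i * y i powr p)"
proof (cases "(\<Sum>i\<in>F. \<phi> i) = 0")
  case True
  then have "\<forall>i\<in>F. \<phi> i = 0"
    using assms(1,3) sum_nonneg_eq_0_iff by blast
  then show ?thesis by simp
next
  case False
  define W where "W = (\<Sum>i\<in>F. \<phi> i)"
  define S where "S = (\<Sum>i\<in>F. \<phi> i * y i)"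
  define Q where "Q = (\<Sum>i\<in>F. \<phi> i * y i powr p)"
  have W: "0 < W"
    using False assms(3) sum_nonneg[of F \<phi>] unfolding W_def by fastforce
  have "(\<Sum>i\<in>F. (\<phi> i / W) *\<^sub>R y i) powr p \<le> (\<Sum>i\<in>F. (\<phi> i / W) * y i powr p)"
  proof (rule convex_on_sum[OF assms(1) _ convex_on_nonneg_powr[OF assms(2)]])
    show "F \<noteq> {}" using False by auto
    show "(\<Sum>i\<in>F. \<phi> i / W) = 1"
      using W by (simp add: W_def flip: sum_divide_distrib)
  qed (use assms W in auto)
  then have "(S / W) powr p \<le> Q / W"
    by (simp add: S_def Q_def sum_divide_distrib)
  moreover have "0 \<le> S"
    unfolding S_def using assms by (intro sum_nonneg) simp
  ultimately have "S powr p \<le> W powr p * (Q / W)"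
    using W by (simp add: powr_divide divide_le_eq mult.commute)
  also have "\<dots> = W powr (p - 1) * Q"
    using W by (simp add: powr_diff)
  finally show ?thesis by (simp add: S_def Q_def W_def)
qed

lemma ennreal_powr_le_of_le_SUP:
  assumes p: "0 < p" and "0 \<le> x" and x_le: "ennreal x \<le> (SUP i\<in>I. ennreal (a i))"
    and a_nonneg: "\<And>i. i \<in> I \<Longrightarrow> 0 \<le> a i"
    and a_bound: "\<And>i. i \<in> I \<Longrightarrow> ennreal (a i powr p) \<le> R"
  shows "ennreal (x powr p) \<le> R"
proof (rule ccontr)
  assume "\<not> ennreal (x powr p) \<le> R"
  then have "R < ennreal (x powr p)" by simp
  then obtain r where r: "R = ennreal r" "0 \<le> r" "r < x powr p"
    by (metis ennreal_less_iff ennreal_less_top less_top_ennreal order.strict_trans)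
  have "r powr (1/p) < x"
  proof (rule ccontr)
    assume "\<not> r powr (1/p) < x"
    then have "x powr p \<le> (r powr (1/p)) powr p"
      using \<open>0 \<le> x\<close> p by (intro powr_mono2) auto
    then show False
      using r p by (simp add: powr_powr)
  qed
  then have "ennreal (r powr (1/p)) < (SUP i\<in>I. ennreal (a i))"
    using x_le \<open>0 \<le> x\<close> by (metis ennreal_less_iff less_le_trans powr_ge_zero)
  then obtain i where i: "i \<in> I" "r powr (1/p) < a i"
    by (auto simp: less_SUP_iff ennreal_less_iff a_nonneg)
  then have "r < a i powr p"
    using r p powr_less_mono2[of p "r powr (1/p)" "a i"] by (simp add: powr_powr)
  then show False
    using a_bound[OF i(1)] r a_nonneg[OF i(1)] by (simp add: ennreal_le_iff)
qed

lemma ennreal_powr_infsum_le: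
  fixes \<phi> y :: "'a \<Rightarrow> real"
  assumes p: "1 \<le> p" and \<phi>: "\<And>k. 0 \<le> \<phi> k" and y: "\<And>k. 0 \<le> y k" and "0 \<le> x" "0 \<le> W"
    and \<phi>_bound: "(\<Sum>\<^sub>\<infinity>k. ennreal (\<phi> k)) \<le> ennreal W"
    and x_le: "ennreal x \<le> (\<Sum>\<^sub>\<infinity>k. ennreal (\<phi> k * y k))"
  shows "ennreal (x powr p) \<le> ennreal (W powr (p - 1)) * (\<Sum>\<^sub>\<infinity>k. ennreal (\<phi> k * y k powr p))"
proof (rule ennreal_powr_le_of_le_SUP[where I = "{F. finite F}" and a = "\<lambda>F. \<Sum>k\<in>F. \<phi> k * y k"])
  have sum_le_infsum: "sum f F \<le> infsum f UNIV" if "finite F" for f :: "'a \<Rightarrow> ennreal" and F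
    using that by (subst nonneg_infsum_complete) (auto intro: SUP_upper)
  show "ennreal x \<le> (SUP F\<in>{F. finite F}. ennreal (\<Sum>k\<in>F. \<phi> k * y k))"
    using x_le \<phi> y by (simp add: nonneg_infsum_complete sum_ennreal)
  fix F :: "'a set"
  assume "F \<in> {F. finite F}"
  then have F: "finite F" by simp
  have "ennreal (\<Sum>k\<in>F. \<phi> k) \<le> ennreal W"
    using sum_le_infsum[OF F, of "\<lambda>k. ennreal (\<phi> k)"] \<phi>_bound \<phi> by (simp add: sum_ennreal)
  then have "(\<Sum>k\<in>F. \<phi> k) \<le> W"
    using \<open>0 \<le> W\<close> by (simp add: ennreal_le_iff)
  then have "(\<Sum>k\<in>F. \<phi> k) powr (p - 1) \<le> W powr (p - 1)"
    using p \<phi> by (intro powr_mono2 sum_nonneg) auto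
  moreover have Q: "0 \<le> (\<Sum>k\<in>F. \<phi> k * y k powr p)"
    using \<phi> by (intro sum_nonneg) simp
  ultimately have "(\<Sum>k\<in>F. \<phi> k * y k) powr p \<le> W powr (p - 1) * (\<Sum>k\<in>F. \<phi> k * y k powr p)"
    using sum_weighted_powr_le[OF F p, of \<phi> y] \<phi> y
    by (meson mult_right_mono order.trans)
  then have "ennreal ((\<Sum>k\<in>F. \<phi> k * y k) powr p)
      \<le> ennreal (W powr (p - 1)) * ennreal (\<Sum>k\<in>F. \<phi> k * y k powr p)"
    using Q by (simp add: ennreal_leI flip: ennreal_mult)
  also have "\<dots> = ennreal (W powr (p - 1)) * (\<Sum>k\<in>F. ennreal (\<phi> k * y k powr p))"
    using \<phi> by (simp add: sum_ennreal)
  also have "\<dots> \<le> ennreal (W powr (p - 1)) * (\<Sum>\<^sub>\<infinity>k. ennreal (\<phi> k * y k powr p))"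
    by (intro mult_left_mono sum_le_infsum F) simp
  finally show "ennreal ((\<Sum>k\<in>F. \<phi> k * y k) powr p) \<le> \<dots>" .
qed (use assms in \<open>auto intro: sum_nonneg\<close>)

lemma nn_integral_lborel_translate:
  fixes f :: "real \<Rightarrow> ennreal"
  assumes "f \<in> borel_measurable borel"
  shows "(\<integral>\<^sup>+t. f (t - s) \<partial>lborel) = (\<integral>\<^sup>+t. f t \<partial>lborel)"
  using nn_integral_real_affine[OF assms, of 1 "- s"] by simp

text \<open>A weighted Schur test: Jensen's inequality with the weights \<open>\<psi> k (t - s)\<close> pointwise, then
  Tonelli, so that integrating in \<open>t\<close> first costs at most \<open>K\<close> for every \<open>k\<close>.\<close>

lemma convolution_Schur_test:
  fixes \<psi> y :: "int \<Rightarrow> real \<Rightarrow> real" and B :: "real \<Rightarrow> real" and \<Phi> :: "real \<Rightarrow> real \<Rightarrow> real"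
    and K :: ennreal
  assumes p: "1 \<le> p"
    and \<psi>_nonneg: "\<And>k \<tau>. 0 \<le> \<psi> k \<tau>" and [measurable]: "\<And>k. \<psi> k \<in> borel_measurable borel"
    and B_nonneg: "\<And>\<tau>. 0 \<le> B \<tau>" and [measurable]: "B \<in> borel_measurable borel"
    and \<psi>_sum: "\<And>\<tau>. 0 < \<tau> \<Longrightarrow> (\<Sum>\<^sub>\<infinity>k. ennreal (\<psi> k \<tau>)) \<le> ennreal (B \<tau>)"
    and kernel: "\<And>k. (\<integral>\<^sup>+\<tau>. ennreal (B \<tau> powr (p - 1) * \<psi> k \<tau>) * indicator {0<..} \<tau> \<partial>lborel) \<le> K"
    and y_nonneg: "\<And>k s. 0 \<le> y k s" and [measurable]: "\<And>k. y k \<in> borel_measurable borel"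
    and \<Phi>: "\<And>t s. 0 < s \<Longrightarrow> s < t \<Longrightarrow> t < T \<Longrightarrow>
      0 \<le> \<Phi> t s \<and> ennreal (\<Phi> t s) \<le> (\<Sum>\<^sub>\<infinity>k. ennreal (\<psi> k (t - s) * y k s))"
  shows "(\<integral>\<^sup>+t. (\<integral>\<^sup>+s. ennreal (\<Phi> t s powr p) * indicator {0<..<t} s \<partial>lborel)
             * indicator {0<..<T} t \<partial>lborel)
     \<le> K * (\<integral>\<^sup>+s. (\<Sum>\<^sub>\<infinity>k. ennreal (y k s powr p)) * indicator {0<..<T} s \<partial>lborel)"
proof -
  define Ker where "Ker k \<tau> = ennreal (B \<tau> powr (p - 1) * \<psi> k \<tau>) * indicator {0<..} \<tau>" for k \<tau>
  define G where "G k t s = ennreal (y k s powr p) * indicator {0<..<T} s * Ker k (t - s)" for k t s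
  have [measurable]: "(\<lambda>(t, s). G k t s) \<in> borel_measurable (lborel \<Otimes>\<^sub>M lborel)" for k
    unfolding G_def Ker_def by measurable
  have [measurable]: "Ker k \<in> borel_measurable borel" for k
    unfolding Ker_def by measurable
  have [measurable]: "G k t \<in> borel_measurable lborel" for k t
    unfolding G_def Ker_def by measurable
  have pointwise: "ennreal (\<Phi> t s powr p) * indicator {0<..<t} s \<le> (\<Sum>\<^sub>\<infinity>k. G k t s)"
    if t: "t \<in> {0<..<T}" for t s
  proof (cases "s \<in> {0<..<t}")
    case True
    then have "ennreal (\<Phi> t s powr p)
        \<le> ennreal (B (t - s) powr (p - 1)) * (\<Sum>\<^sub>\<infinity>k. ennreal (\<psi> k (t - s) * y k s powr p))"
      using t \<Phi>[of s t] \<psi>_sum[of "t - s"]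
      by (intro ennreal_powr_infsum_le p \<psi>_nonneg y_nonneg B_nonneg) auto
    also have "\<dots> = (\<Sum>\<^sub>\<infinity>k. G k t s)"
      using True t \<psi>_nonneg B_nonneg
      by (simp add: G_def Ker_def ennreal_mult' mult_ac flip: infsum_cmult_right_ennreal)
    finally show ?thesis using True by simp
  qed simp
  have kernel_integral: "(\<integral>\<^sup>+t. G k t s \<partial>lborel) \<le> ennreal (y k s powr p) * indicator {0<..<T} s * K"
    for k s
  proof -
    have "(\<integral>\<^sup>+t. G k t s \<partial>lborel)
        = ennreal (y k s powr p) * indicator {0<..<T} s * (\<integral>\<^sup>+\<tau>. Ker k \<tau> \<partial>lborel)"
      unfolding G_def by (simp add: nn_integral_cmult nn_integral_lborel_translate)
    also have "\<dots> \<le> ennreal (y k s powr p) * indicator {0<..<T} s * K"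
      using kernel[of k] by (intro mult_left_mono) (simp_all add: Ker_def)
    finally show ?thesis .
  qed
  have "(\<integral>\<^sup>+t. (\<integral>\<^sup>+s. ennreal (\<Phi> t s powr p) * indicator {0<..<t} s \<partial>lborel)
             * indicator {0<..<T} t \<partial>lborel)
      \<le> (\<integral>\<^sup>+t. (\<integral>\<^sup>+s. (\<Sum>\<^sub>\<infinity>k. G k t s) \<partial>lborel) \<partial>lborel)"
    using pointwise by (intro nn_integral_mono) (auto intro: nn_integral_mono simp: indicator_def)
  also have "\<dots> = (\<Sum>\<^sub>\<infinity>k. \<integral>\<^sup>+t. (\<integral>\<^sup>+s. G k t s \<partial>lborel) \<partial>lborel)"
    by (simp add: nn_integral_infsum_int)
  also have "\<dots> = (\<Sum>\<^sub>\<infinity>k. \<integral>\<^sup>+s. (\<integral>\<^sup>+t. G k t s \<partial>lborel) \<partial>lborel)"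
    by (intro infsum_cong lborel_pair.Fubini') measurable
  also have "\<dots> \<le> (\<Sum>\<^sub>\<infinity>k. \<integral>\<^sup>+s. ennreal (y k s powr p) * indicator {0<..<T} s * K \<partial>lborel)"
    by (intro infsum_mono_neutral nn_integral_mono kernel_integral) (auto intro: nonneg_summable_on_complete)
  also have "\<dots> = K * (\<Sum>\<^sub>\<infinity>k. \<integral>\<^sup>+s. ennreal (y k s powr p) * indicator {0<..<T} s \<partial>lborel)"
    unfolding mult.commute[of K] infsum_cmult_right_ennreal[symmetric]
    by (intro infsum_cong nn_integral_multc) measurable
  also have "\<dots> = K * (\<integral>\<^sup>+s. (\<Sum>\<^sub>\<infinity>k. ennreal (y k s powr p)) * indicator {0<..<T} s \<partial>lborel)"
    by (simp add: nn_integral_infsum_int[symmetric] mult.commute[of _ "indicator _ _"]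
        infsum_cmult_right_ennreal)
  finally show ?thesis .
qed

lemma power_scaling_bound:
  fixes S :: "real \<Rightarrow> ennreal"
  assumes b: "1 < b" and a: "0 < a" and "0 \<le> s" and \<tau>: "0 < \<tau>"
    and scale: "\<And>m \<sigma>. S (b powr real_of_int m * \<sigma>) = ennreal (b powr (- a * real_of_int m)) * S \<sigma>"
    and antimono: "\<And>\<sigma>. 1 \<le> \<sigma> \<Longrightarrow> S \<sigma> \<le> S 1"
    and S1: "S 1 \<le> ennreal s"
  shows "S \<tau> \<le> ennreal (s * b powr a * \<tau> powr (- a))"
proof -
  define m where "m = \<lfloor>log b \<tau>\<rfloor>"
  have "b powr real_of_int m \<le> \<tau>" "\<tau> < b powr (real_of_int m + 1)"
    using b \<tau> by (simp_all add: m_def powr_le_iff le_log_iff less_powr_iff)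
  have "S \<tau> = ennreal (b powr (- a * real_of_int m)) * S (\<tau> / b powr real_of_int m)"
    using scale[of m "\<tau> / b powr real_of_int m"] b by simp
  also have "\<dots> \<le> ennreal (b powr (- a * real_of_int m)) * ennreal s"
    using antimono S1 \<open>b powr real_of_int m \<le> \<tau>\<close> b
    by (intro mult_left_mono order.trans[OF antimono S1]) auto
  also have "b powr (- a * real_of_int m) \<le> b powr a * \<tau> powr (- a)"
  proof -
    have "(b powr (real_of_int m + 1)) powr (- a) \<le> \<tau> powr (- a)"
      using \<open>\<tau> < b powr (real_of_int m + 1)\<close> \<tau> a by (intro powr_mono2') auto
    then have "b powr (- a - a * real_of_int m) \<le> \<tau> powr (- a)"
      using b by (simp add: powr_powr algebra_simps)
    moreover have "b powr (- a * real_of_int m) = b powr a * b powr (- a - a * real_of_int m)"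
      by (simp add: powr_add[symmetric])
    ultimately show ?thesis
      using b by simp
  qed
  then have "s * b powr (- a * real_of_int m) \<le> s * b powr a * \<tau> powr (- a)"
    using \<open>0 \<le> s\<close> by (simp add: mult_left_mono mult.assoc)
  then have "ennreal (b powr (- a * real_of_int m)) * ennreal s \<le> ennreal (s * b powr a * \<tau> powr (- a))"
    using \<open>0 \<le> s\<close> by (simp add: ennreal_leI mult.commute flip: ennreal_mult)
  finally show ?thesis .
qed

lemma nn_integral_powr_exp:
  fixes a b :: real
  assumes a: "0 < a" and b: "0 < b"
  shows "(\<integral>\<^sup>+\<tau>. ennreal (\<tau> powr (a - 1) * exp (- b * \<tau>)) * indicator {0<..} \<tau> \<partial>lborel)
    = ennreal (Gamma a / b powr a)"
    (is "?I = _")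
proof -
  define f where "f t = ennreal (indicator {0..} t * t powr (a - 1) / exp t)" for t :: real
  have [measurable]: "f \<in> borel_measurable borel"
    unfolding f_def by measurable
  have f_scaled: "f (b * \<tau>) = ennreal (b powr (a - 1))
      * (ennreal (\<tau> powr (a - 1) * exp (- b * \<tau>)) * indicator {0<..} \<tau>)" for \<tau>
  proof (cases "0 < \<tau>")
    case True
    then show ?thesis
      using b by (simp add: f_def powr_mult exp_minus field_simps flip: ennreal_mult)
  next
    case False
    then show ?thesis
      using b by (auto simp: f_def indicator_def zero_le_mult_iff)
  qed
  have "ennreal (b powr a) * ennreal (Gamma a / b powr a) = ennreal (Gamma a)"
    using a b by (simp flip: ennreal_mult)
  also have "\<dots> = (\<integral>\<^sup>+t. f t \<partial>lborel)"
    using Gamma_conv_nn_integral_real[OF a] by (simp add: f_def)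
  also have "\<dots> = ennreal b * (\<integral>\<^sup>+\<tau>. f (b * \<tau>) \<partial>lborel)"
    using nn_integral_real_affine[of f b 0] b by simp
  also have "\<dots> = ennreal b * (ennreal (b powr (a - 1)) * ?I)"
    unfolding f_scaled by (subst nn_integral_cmult) auto
  also have "\<dots> = ennreal (b * b powr (a - 1)) * ?I"
    using b by (simp add: mult.assoc ennreal_mult)
  also have "b * b powr (a - 1) = b powr a"
    using b by (simp add: powr_mult_base)
  finally show ?thesis
    using b by (simp add: ennreal_mult_cancel_left)
qed

lemma heat_kernel_f_nonneg: "0 \<le> heat_kernel_f c k \<tau>"
  by (simp add: heat_kernel_f_def)

lemma heat_kernel_f_eq: "heat_kernel_f c k \<tau> = exp (- c * 4 powr real_of_int k * \<tau>)"
proof -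
  have "(2::real) powi (2 * k) = 4 powr real_of_int k"
    by (simp add: powr_real_of_int'[symmetric] powr_powr[symmetric])
  then show ?thesis by (simp add: heat_kernel_f_def)
qed

text \<open>The factor \<open>4 powr (k / p) = 2 powr (2 * k / p)\<close> moves the weight \<open>2 powi (- 2 * k)\<close> of the
  right-hand side into the kernel.\<close>

definition weighted_heat_kernel :: "real \<Rightarrow> real \<Rightarrow> int \<Rightarrow> real \<Rightarrow> real" where
  "weighted_heat_kernel p c k \<tau> = 4 powr (real_of_int k / p) * heat_kernel_f c k \<tau>"

lemma weighted_heat_kernel_nonneg: "0 \<le> weighted_heat_kernel p c k \<tau>"
  by (simp add: weighted_heat_kernel_def heat_kernel_f_nonneg)

lemma weighted_heat_kernel_measurable [measurable]:
  "(\<lambda>\<tau>. weighted_heat_kernel p c k \<tau>) \<in> borel_measurable borel"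
  unfolding weighted_heat_kernel_def heat_kernel_f_eq by measurable

lemma weighted_heat_kernel_scale:
  "weighted_heat_kernel p c k (4 powr real_of_int m * \<tau>)
    = 4 powr (- (1 / p) * real_of_int m) * weighted_heat_kernel p c (k + m) \<tau>"
proof -
  have "(4::real) powr (real_of_int k / p) = 4 powr (- (1 / p) * real_of_int m) * 4 powr (real_of_int (k + m) / p)"
    by (simp add: powr_add[symmetric] add_divide_distrib)
  then show ?thesis
    by (simp add: weighted_heat_kernel_def heat_kernel_f_eq powr_add mult_ac)
qed

lemma weighted_heat_kernel_antimono:
  assumes "0 < c" "\<tau> \<le> \<sigma>"
  shows "weighted_heat_kernel p c k \<sigma> \<le> weighted_heat_kernel p c k \<tau>"
  using assms by (simp add: weighted_heat_kernel_def heat_kernel_f_eq)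

lemma weighted_heat_kernel_sum_at_one_finite:
  assumes p: "1 < p" and c: "0 < c"
  shows "(\<Sum>\<^sub>\<infinity>k. ennreal (weighted_heat_kernel p c k 1)) < \<infinity>"
proof -
  define r where "r = (4::real) powr (1 / p - 1)"
  define r' where "r' = (4::real) powr (- 1 / p)"
  have "r < 4 powr 0" "r' < 4 powr 0"
    unfolding r_def r'_def using p by (intro powr_less_mono; simp)+
  then have r: "0 \<le> r" "r < 1" and r': "0 \<le> r'" "r' < 1"
    by (simp_all add: r_def r'_def)
  have "weighted_heat_kernel p c (int n) 1 \<le> 1 / c * r ^ n" for n
  proof -
    have "c * 4 ^ n \<le> exp (c * 4 ^ n)"
      using exp_ge_add_one_self[of "c * 4 ^ n"] by linarith
    then have "exp (- (c * 4 ^ n)) \<le> 1 / (c * 4 ^ n)"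
      using c by (simp add: exp_minus field_simps)
    then have "4 powr (real n / p) * exp (- (c * 4 ^ n)) \<le> 4 powr (real n / p) * (1 / (c * 4 ^ n))"
      by (rule mult_left_mono) simp
    then have "weighted_heat_kernel p c (int n) 1 \<le> 4 powr (real n / p) * (1 / (c * 4 ^ n))"
      by (simp add: weighted_heat_kernel_def heat_kernel_f_eq powr_realpow)
    also have "\<dots> = 1 / c * (4 powr (real n / p) / 4 powr real n)"
      by (simp add: powr_realpow)
    also have "4 powr (real n / p) / 4 powr real n = r ^ n"
      by (simp add: r_def powr_power powr_diff[symmetric] algebra_simps)
    finally show ?thesis .
  qed
  moreover have "weighted_heat_kernel p c (- int (Suc n)) 1 \<le> r' ^ n" for n
  proof -
    have "weighted_heat_kernel p c (- int (Suc n)) 1 \<le> 4 powr (- real (Suc n) / p)"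
      using c by (simp add: weighted_heat_kernel_def heat_kernel_f_eq)
    also have "\<dots> \<le> 4 powr (- real n / p)"
      using p by (simp add: field_simps)
    also have "\<dots> = r' ^ n"
      by (simp add: r'_def powr_power)
    finally show ?thesis .
  qed
  ultimately have "(\<Sum>\<^sub>\<infinity>k. ennreal (weighted_heat_kernel p c k 1))
      \<le> (\<Sum>n. ennreal (1 / c * r ^ n)) + (\<Sum>n. ennreal (r' ^ n))"
    unfolding infsum_int_ennreal_split by (intro add_mono suminf_le ennreal_leI) auto
  also have "\<dots> = ennreal (\<Sum>n. 1 / c * r ^ n) + ennreal (\<Sum>n. r' ^ n)"
    using r r' c by (intro arg_cong2[where f = "(+)"] suminf_ennreal2 summable_mult summable_geometric) auto
  finally show ?thesis
    using le_less_trans by fastforce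
qed

lemma weighted_heat_kernel_sum_bound:
  assumes p: "1 < p" and c: "0 < c"
  obtains A where "0 < A"
    and "\<And>\<tau>. 0 < \<tau> \<Longrightarrow> (\<Sum>\<^sub>\<infinity>k. ennreal (weighted_heat_kernel p c k \<tau>)) \<le> ennreal (A * \<tau> powr (- 1 / p))"
proof -
  define S where "S \<tau> = (\<Sum>\<^sub>\<infinity>k. ennreal (weighted_heat_kernel p c k \<tau>))" for \<tau>
  obtain s where s: "0 \<le> s" "S 1 = ennreal s"
    using weighted_heat_kernel_sum_at_one_finite[OF p c] by (auto simp: S_def less_top_ennreal)
  have "S (4 powr real_of_int m * \<sigma>) = ennreal (4 powr (- (1 / p) * real_of_int m)) * S \<sigma>" for m \<sigma>
  proof -
    have "bij (\<lambda>k. k + m)"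
      by (rule bij_betwI[where g = "\<lambda>k. k - m"]) auto
    then have "(\<Sum>\<^sub>\<infinity>k. ennreal (weighted_heat_kernel p c (k + m) \<sigma>)) = S \<sigma>"
      unfolding S_def by (rule infsum_reindex_bij_betw)
    then show ?thesis
      by (simp add: S_def weighted_heat_kernel_scale ennreal_mult weighted_heat_kernel_nonneg
          infsum_cmult_right_ennreal)
  qed
  moreover have "S \<sigma> \<le> S 1" if "1 \<le> \<sigma>" for \<sigma>
    unfolding S_def using c that
    by (intro infsum_mono_neutral ennreal_leI weighted_heat_kernel_antimono)
      (auto intro: nonneg_summable_on_complete)
  ultimately have "S \<tau> \<le> ennreal ((s + 1) * 4 powr (1 / p) * \<tau> powr (- (1 / p)))" if "0 < \<tau>" for \<tau>
    using s p that by (intro power_scaling_bound[where S = S]) auto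
  moreover have "0 < (s + 1) * 4 powr (1 / p)"
    using s by simp
  ultimately show ?thesis
    using that by (simp add: S_def)
qed

lemma weighted_heat_kernel_integral:
  assumes p: "1 < p" and c: "0 < c" and A: "0 \<le> A"
  shows "(\<integral>\<^sup>+\<tau>. ennreal ((A * \<tau> powr (- 1 / p)) powr (p - 1) * weighted_heat_kernel p c k \<tau>)
            * indicator {0<..} \<tau> \<partial>lborel)
    = ennreal (A powr (p - 1) * Gamma (1 / p) / c powr (1 / p))"
proof -
  define b where "b = c * 4 powr real_of_int k"
  have b: "0 < b"
    using c by (simp add: b_def)
  have "ennreal ((A * \<tau> powr (- 1 / p)) powr (p - 1) * weighted_heat_kernel p c k \<tau>) * indicator {0<..} \<tau>
      = ennreal (A powr (p - 1) * 4 powr (real_of_int k / p))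
        * (ennreal (\<tau> powr (1 / p - 1) * exp (- b * \<tau>)) * indicator {0<..} \<tau>)" for \<tau>
  proof (cases "0 < \<tau>")
    case True
    have "(A * \<tau> powr (- 1 / p)) powr (p - 1) = A powr (p - 1) * \<tau> powr (1 / p - 1)"
    proof -
      have "- 1 / p * (p - 1) = 1 / p - 1"
        using p by (simp add: field_simps)
      then show ?thesis
        using A True by (simp add: powr_mult powr_powr)
    qed
    then show ?thesis
      using True A
      by (simp add: weighted_heat_kernel_def heat_kernel_f_eq b_def mult_ac flip: ennreal_mult)
  qed simp
  then have "(\<integral>\<^sup>+\<tau>. ennreal ((A * \<tau> powr (- 1 / p)) powr (p - 1) * weighted_heat_kernel p c k \<tau>)
            * indicator {0<..} \<tau> \<partial>lborel)
      = ennreal (A powr (p - 1) * 4 powr (real_of_int k / p)) * ennreal (Gamma (1 / p) / b powr (1 / p))"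
    using p b nn_integral_powr_exp[of "1 / p" b] by (simp add: nn_integral_cmult)
  also have "b powr (1 / p) = c powr (1 / p) * 4 powr (real_of_int k / p)"
    using c by (simp add: b_def powr_mult powr_powr)
  also have "ennreal (A powr (p - 1) * 4 powr (real_of_int k / p))
      * ennreal (Gamma (1 / p) / (c powr (1 / p) * 4 powr (real_of_int k / p)))
      = ennreal (A powr (p - 1) * Gamma (1 / p) / c powr (1 / p))"
    using p by (simp add: field_simps flip: ennreal_mult)
  finally show ?thesis .
qed

lemma four_powr_weight_powr_eq:
  assumes "0 < p" "0 \<le> a"
  shows "(4 powr (- real_of_int k / p) * a) powr p = 2 powi (- 2 * k) * a powr p"
proof -
  have "(2::real) powr (2 * - real_of_int k) = (2 powr 2) powr (- real_of_int k)"
    by (simp only: powr_powr)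
  then have "(4 powr (- real_of_int k / p)) powr p = 2 powr real_of_int (- 2 * k)"
    using assms by (simp add: powr_powr)
  also have "\<dots> = 2 powi (- 2 * k)"
    by (rule powr_real_of_int') auto
  finally show ?thesis
    using assms by (simp add: powr_mult)
qed

lemma heat_kernel_convolution_bound:
  fixes p c :: real
  assumes p: "1 < p" and c: "0 < c"
  obtains C where "0 < C"
    and "\<And>T (g :: int \<Rightarrow> real \<Rightarrow> real) (\<Phi> :: real \<Rightarrow> real \<Rightarrow> real).
      (\<And>j. set_borel_measurable lborel {0<..<T} (g j)) \<Longrightarrow>
      (\<And>t s. 0 < s \<Longrightarrow> s < t \<Longrightarrow> t < T \<Longrightarrow>
        0 \<le> \<Phi> t s \<and> ennreal (\<Phi> t s) \<le> (\<Sum>\<^sub>\<infinity>j. ennreal (heat_kernel_f c j (t - s) * \<bar>g j s\<bar>))) \<Longrightarrow>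
      (\<integral>\<^sup>+t. (\<integral>\<^sup>+s. ennreal (\<Phi> t s powr p) * indicator {0<..<t} s \<partial>lborel)
          * indicator {0<..<T} t \<partial>lborel)
        \<le> ennreal C * (\<integral>\<^sup>+s. (\<Sum>\<^sub>\<infinity>j. ennreal (2 powi (- 2 * j) * \<bar>g j s\<bar> powr p))
          * indicator {0<..<T} s \<partial>lborel)"
proof -
  obtain A where A: "0 < A"
    and sum_bound: "\<And>\<tau>. 0 < \<tau> \<Longrightarrow> (\<Sum>\<^sub>\<infinity>k. ennreal (weighted_heat_kernel p c k \<tau>)) \<le> ennreal (A * \<tau> powr (- 1 / p))"
    using weighted_heat_kernel_sum_bound[OF p c] by blast
  define C where "C = A powr (p - 1) * Gamma (1 / p) / c powr (1 / p)"
  have "0 < C"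
    using A p c by (simp add: C_def)
  moreover have "(\<integral>\<^sup>+t. (\<integral>\<^sup>+s. ennreal (\<Phi> t s powr p) * indicator {0<..<t} s \<partial>lborel)
          * indicator {0<..<T} t \<partial>lborel)
        \<le> ennreal C * (\<integral>\<^sup>+s. (\<Sum>\<^sub>\<infinity>j. ennreal (2 powi (- 2 * j) * \<bar>g j s\<bar> powr p))
          * indicator {0<..<T} s \<partial>lborel)"
    if g: "\<And>j. set_borel_measurable lborel {0<..<T} (g j)"
      and \<Phi>: "\<And>t s. 0 < s \<Longrightarrow> s < t \<Longrightarrow> t < T \<Longrightarrow>
        0 \<le> \<Phi> t s \<and> ennreal (\<Phi> t s) \<le> (\<Sum>\<^sub>\<infinity>j. ennreal (heat_kernel_f c j (t - s) * \<bar>g j s\<bar>))"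
    for T g \<Phi>
  proof -
    define y where "y j s = 4 powr (- real_of_int j / p) * \<bar>indicator {0<..<T} s * g j s\<bar>" for j s
    have [measurable]: "(\<lambda>s. indicator {0<..<T} s * g j s) \<in> borel_measurable borel" for j
      using g[of j] by (simp add: set_borel_measurable_def)
    have [measurable]: "y j \<in> borel_measurable borel" for j
      unfolding y_def by measurable
    have "(\<integral>\<^sup>+t. (\<integral>\<^sup>+s. ennreal (\<Phi> t s powr p) * indicator {0<..<t} s \<partial>lborel)
          * indicator {0<..<T} t \<partial>lborel)
        \<le> ennreal C * (\<integral>\<^sup>+s. (\<Sum>\<^sub>\<infinity>j. ennreal (y j s powr p)) * indicator {0<..<T} s \<partial>lborel)"
    proof (rule convolution_Schur_test[where \<psi> = "weighted_heat_kernel p c" and B = "\<lambda>\<tau>. A * \<tau> powr (- 1 / p)"])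
      show "(\<integral>\<^sup>+\<tau>. ennreal ((A * \<tau> powr (- 1 / p)) powr (p - 1) * weighted_heat_kernel p c k \<tau>)
          * indicator {0<..} \<tau> \<partial>lborel) \<le> ennreal C" for k
        using weighted_heat_kernel_integral[OF p c, of A k] A by (simp add: C_def)
      show "0 \<le> \<Phi> t s \<and> ennreal (\<Phi> t s) \<le> (\<Sum>\<^sub>\<infinity>k. ennreal (weighted_heat_kernel p c k (t - s) * y k s))"
        if "0 < s" "s < t" "t < T" for t s
      proof -
        have "weighted_heat_kernel p c k (t - s) * y k s = heat_kernel_f c k (t - s) * \<bar>g k s\<bar>" for k
          using that by (simp add: weighted_heat_kernel_def y_def powr_minus field_simps)
        then show ?thesis
          using \<Phi>[OF that] by simp
      qed
    qed (use p A sum_bound in \<open>auto simp: weighted_heat_kernel_nonneg y_def weighted_heat_kernel_def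
          heat_kernel_f_eq\<close>)
    also have "(\<integral>\<^sup>+s. (\<Sum>\<^sub>\<infinity>j. ennreal (y j s powr p)) * indicator {0<..<T} s \<partial>lborel)
        = (\<integral>\<^sup>+s. (\<Sum>\<^sub>\<infinity>j. ennreal (2 powi (- 2 * j) * \<bar>g j s\<bar> powr p))
          * indicator {0<..<T} s \<partial>lborel)"
      using p by (intro nn_integral_cong) (auto simp: y_def four_powr_weight_powr_eq[simplified] indicator_def)
    finally show ?thesis .
  qed
  ultimately show ?thesis
    using that by blast
qed

theorem lemma5p1:
  fixes T p c :: real
  assumes "0 < T" and "1 < p" and "0 < c"
  shows "\<exists>C::real. C > 0 \<and>
    (\<forall>g :: int \<Rightarrow> real \<Rightarrow> real.
       (\<forall>j. set_borel_measurable lborel {0<..<T} (g j)) \<longrightarrow>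
       ((\<integral>\<^sup>+ t. (\<integral>\<^sup>+ s. ennreal (\<bar>\<Sum>j. heat_kernel_f c (int (Suc j)) (t - s) * g (int (Suc j)) s\<bar> powr p)
                 * indicator {0<..<t} s \<partial>lborel) * indicator {0<..<T} t \<partial>lborel)
         \<le> ennreal C * (\<integral>\<^sup>+ s. (\<Sum>j. ennreal ((2::real) powi (- 2 * int (Suc j)) * \<bar>g (int (Suc j)) s\<bar> powr p))
                 * indicator {0<..<T} s \<partial>lborel)
        \<and>
        (\<integral>\<^sup>+ t. (\<integral>\<^sup>+ s. ennreal (\<bar>\<Sum>\<^sub>\<infinity>j\<in>(UNIV::int set). heat_kernel_f c j (t - s) * g j s\<bar> powr p)
                 * indicator {0<..<t} s \<partial>lborel) * indicator {0<..<T} t \<partial>lborel)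
         \<le> ennreal C * (\<integral>\<^sup>+ s. (\<Sum>\<^sub>\<infinity>j\<in>(UNIV::int set). ennreal ((2::real) powi (- 2 * j) * \<bar>g j s\<bar> powr p))
                 * indicator {0<..<T} s \<partial>lborel)))"
  (is "\<exists>C. _ \<and> (\<forall>g. _ \<longrightarrow> ?nat_sum C g \<and> ?int_sum C g)")
proof (cases rule: heat_kernel_convolution_bound[OF assms(2,3)])
  case (1 C)
  note bound = 1(2)
  show ?thesis
  proof (intro exI[of _ C] conjI allI impI \<open>0 < C\<close>)
    fix g :: "int \<Rightarrow> real \<Rightarrow> real"
    assume g: "\<forall>j. set_borel_measurable lborel {0<..<T} (g j)"
    define g' where "g' j = (if 0 < j then g j else (\<lambda>_. 0))" for j
    have g'_measurable: "set_borel_measurable lborel {0<..<T} (g' j)" for j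
      using g by (simp add: g'_def set_borel_measurable_def)
    have pointwise: "0 \<le> \<bar>\<Sum>n. heat_kernel_f c (int (Suc n)) (t - s) * g (int (Suc n)) s\<bar>
        \<and> ennreal \<bar>\<Sum>n. heat_kernel_f c (int (Suc n)) (t - s) * g (int (Suc n)) s\<bar>
          \<le> (\<Sum>\<^sub>\<infinity>j. ennreal (heat_kernel_f c j (t - s) * \<bar>g' j s\<bar>))" for t s
      using ennreal_abs_suminf_le[of "\<lambda>n. heat_kernel_f c (int (Suc n)) (t - s) * g (int (Suc n)) s"]
      by (subst infsum_int_ennreal_eq_suminf_pos) (auto simp: g'_def abs_mult heat_kernel_f_nonneg)
    have weights: "(\<Sum>\<^sub>\<infinity>j. ennreal (2 powi (- 2 * j) * \<bar>g' j s\<bar> powr p))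
        = (\<Sum>n. ennreal (2 powi (- 2 * int (Suc n)) * \<bar>g (int (Suc n)) s\<bar> powr p))" for s
      by (subst infsum_int_ennreal_eq_suminf_pos) (auto simp: g'_def)
    show "?nat_sum C g"
      using bound[OF g'_measurable pointwise] by (simp only: weights)
    show "?int_sum C g"
    proof (rule bound)
      show "0 \<le> \<bar>\<Sum>\<^sub>\<infinity>j. heat_kernel_f c j (t - s) * g j s\<bar>
          \<and> ennreal \<bar>\<Sum>\<^sub>\<infinity>j. heat_kernel_f c j (t - s) * g j s\<bar>
            \<le> (\<Sum>\<^sub>\<infinity>j. ennreal (heat_kernel_f c j (t - s) * \<bar>g j s\<bar>))" for t s
        using ennreal_abs_infsum_le[of "\<lambda>j. heat_kernel_f c j (t - s) * g j s"]
        by (simp add: abs_mult heat_kernel_f_nonneg)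
    qed (use g in simp)
  qed
qed

end
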